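(* For any signed graphs $(G,\sigma)$ and $(H,\tau)$, $$\chi_c\big((G,\sigma)\square'(H,\tau)\big)\le 2\max\{\chi(G),\chi(H)\},$$ where $\chi(G),\chi(H)$ are the chromatic numbers of the underlying graphs.
   Context: A signed graph $(G,\sigma)$ is a finite graph $G$ (multiple edges allowed, no loops) with a signature $\sigma:E(G)\to\{+1,-1\}$. For real $r\ge 2$, $C^r$ is the circle of circumference $r$, $d_{C^r}(x,y)=\min\{|x-y|,r-|x-y|\}$, $\overline{x}=x+r/2\pmod r$. A circular $r$-coloring of $(G,\sigma)$ is $f:V(G)\to C^r$ with $d_{C^r}(f(u),f(v))\ge1$ for each positive edge $uv$ and $d_{C^r}(f(u),\overline{f(v)})\ge1$ for each negative edge $uv$; $\chi_c(G,\sigma)$ is the infimum of such $r\ge2$. Vertex signs: fix an orientation of $G$; for $u\in V(G)$ let $\sigma(u)=\prod_{e\in E_u}\sigma(e)^{\epsilon(e,u)}$, where $E_u$ is the set of edges incident to $u$ and $\epsilon(e,u)=1$ if $e$ is oriented away from $u$ and $-1$ otherwise; similarly $\tau(x)$. The Type 2 Cartesian product $(G,\sigma)\square'(H,\tau)$ has vertex set $V(G)\times V(H)$, with $(u,x)(v,y)$ an edge iff either $u=v$ and $xy\in E(H)$, or $x=y$ and $uv\in E(G)$; the edge $(u,x)(v,x)$ has sign $\sigma(uv)\tau(x)$ and the edge $(u,x)(u,y)$ has sign $\sigma(u)\tau(xy)$. *)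

theory Defs
  imports Complex_Main
begin

text \<open>A signed graph: finite vertex set, finite set of edge identifiers (so multiple
edges are allowed), each edge carrying a fixed orientation (tail src, head trg),
no loops, and a signature with values in {+1,-1}.\<close>

record ('v, 'e) sgraph =
  verts :: "'v set"
  edges :: "'e set"
  src :: "'e \<Rightarrow> 'v"
  trg :: "'e \<Rightarrow> 'v"
  sgn :: "'e \<Rightarrow> real"

definition signed_graph :: "('v, 'e) sgraph \<Rightarrow> bool" where
  "signed_graph G \<longleftrightarrow> finite (verts G) \<and> finite (edges G) \<and>
     (\<forall>e \<in> edges G. src G e \<in> verts G \<and> trg G e \<in> verts G \<and> src G e \<noteq> trg G e
        \<and> (sgn G e = 1 \<or> sgn G e = -1))"

definition vsign :: "('v, 'e) sgraph \<Rightarrow> 'v \<Rightarrow> real" where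
  "vsign G u = (\<Prod>e \<in> {e \<in> edges G. src G e = u \<or> trg G e = u}.
       sgn G e powi (if src G e = u then 1 else -1))"

definition cart2 :: "('v, 'e) sgraph \<Rightarrow> ('w, 'f) sgraph \<Rightarrow>
    ('v \<times> 'w, ('e \<times> 'w) + ('v \<times> 'f)) sgraph" where
  "cart2 G H = \<lparr> verts = verts G \<times> verts H,
     edges = (edges G \<times> verts H) <+> (verts G \<times> edges H),
     src = (\<lambda>z. case z of Inl (e, x) \<Rightarrow> (src G e, x) | Inr (u, f) \<Rightarrow> (u, src H f)),
     trg = (\<lambda>z. case z of Inl (e, x) \<Rightarrow> (trg G e, x) | Inr (u, f) \<Rightarrow> (u, trg H f)),
     sgn = (\<lambda>z. case z of Inl (e, x) \<Rightarrow> sgn G e * vsign H x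
                         | Inr (u, f) \<Rightarrow> vsign G u * sgn H f) \<rparr>"

text \<open>The circle C^r, represented by [0,r).\<close>
definition cdist :: "real \<Rightarrow> real \<Rightarrow> real \<Rightarrow> real" where
  "cdist r x y = min \<bar>x - y\<bar> (r - \<bar>x - y\<bar>)"

definition antipode :: "real \<Rightarrow> real \<Rightarrow> real" where
  "antipode r x = (if x + r / 2 < r then x + r / 2 else x + r / 2 - r)"

definition circular_coloring :: "real \<Rightarrow> ('v, 'e) sgraph \<Rightarrow> ('v \<Rightarrow> real) \<Rightarrow> bool" where
  "circular_coloring r G f \<longleftrightarrow>
     (\<forall>v \<in> verts G. 0 \<le> f v \<and> f v < r) \<and>
     (\<forall>e \<in> edges G.
        (sgn G e = 1 \<longrightarrow> cdist r (f (src G e)) (f (trg G e)) \<ge> 1) \<and>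
        (sgn G e = -1 \<longrightarrow> cdist r (f (src G e)) (antipode r (f (trg G e))) \<ge> 1))"

definition chi_c :: "('v, 'e) sgraph \<Rightarrow> real" where
  "chi_c G = Inf {r. r \<ge> 2 \<and> (\<exists>f. circular_coloring r G f)}"

definition chi :: "('v, 'e) sgraph \<Rightarrow> nat" where
  "chi G = (LEAST k. \<exists>c :: 'v \<Rightarrow> nat. (\<forall>v \<in> verts G. c v < k) \<and>
              (\<forall>e \<in> edges G. c (src G e) \<noteq> c (trg G e)))"

end

theory Submission
  imports Defs
begin

text \<open>A proper k-colouring with colours 0, ..., k-1 placed on the circle of circumference 2k is a
circular colouring for every signature: distinct colours are at distance at least 1, and the
antipode shifts a colour by exactly k, which keeps it at distance at least 1 from every colour
(including itself). If c and d properly k-colour G and H, then (c u + d x) mod k properly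
k-colours the underlying graph of the product, so one may take k = max(chi G, chi H).\<close>

definition proper_coloring :: "('v, 'e) sgraph \<Rightarrow> nat \<Rightarrow> ('v \<Rightarrow> nat) \<Rightarrow> bool" where
  "proper_coloring G k c \<longleftrightarrow>
     (\<forall>v \<in> verts G. c v < k) \<and> (\<forall>e \<in> edges G. c (src G e) \<noteq> c (trg G e))"

lemma chi_eq_Least_proper_coloring: "chi G = (LEAST k. \<exists>c. proper_coloring G k c)"
  unfolding chi_def proper_coloring_def ..

lemma proper_coloring_mono:
  "proper_coloring G k c \<Longrightarrow> k \<le> k' \<Longrightarrow> proper_coloring G k' c"
  unfolding proper_coloring_def by fastforce

lemma proper_coloring_chi:
  fixes G :: "('v, 'e) sgraph"
  assumes "signed_graph G"
  obtains c where "proper_coloring G (chi G) c"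
proof -
  have fin: "finite (verts G)" using assms by (simp add: signed_graph_def)
  then obtain h :: "'v \<Rightarrow> nat" where h: "inj_on h (verts G)"
    using finite_imp_inj_to_nat_seg by blast
  have "proper_coloring G (Suc (Max (h ` verts G))) h"
    unfolding proper_coloring_def
  proof (intro conjI ballI)
    show "h v < Suc (Max (h ` verts G))" if "v \<in> verts G" for v
      using fin that by (simp add: le_imp_less_Suc)
    show "h (src G e) \<noteq> h (trg G e)" if "e \<in> edges G" for e
      using assms h that unfolding signed_graph_def inj_on_def by metis
  qed
  then have "\<exists>k c. proper_coloring G k c" by blast
  then have "\<exists>c. proper_coloring G (chi G) c"
    unfolding chi_eq_Least_proper_coloring by (rule LeastI_ex)
  then show thesis using that by blast
qed

lemma proper_coloring_pos:
  "proper_coloring G k c \<Longrightarrow> verts G \<noteq> {} \<Longrightarrow> 0 < k"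
  unfolding proper_coloring_def by fastforce

lemma proper_coloring_cart2:
  assumes "signed_graph G" "signed_graph H"
    and c: "proper_coloring G k c" and d: "proper_coloring H k d"
  shows "proper_coloring (cart2 G H) k (\<lambda>(u, x). (c u + d x) mod k)"
proof -
  have shift_inj: "(a + s) mod k \<noteq> (b + s) mod k" if "a < k" "b < k" "a \<noteq> b" for a b s :: nat
  proof
    assume "(a + s) mod k = (b + s) mod k"
    then have "a mod k = b mod k" by (simp add: nat_mod_eq_iff)
    with that show False by simp
  qed
  have k: "0 < k" if "u \<in> verts G" for u
    using proper_coloring_pos[OF c] that by blast
  show ?thesis
    unfolding proper_coloring_def
  proof (intro conjI ballI)
    fix z assume "z \<in> edges (cart2 G H)"
    then consider (left) e x where "z = Inl (e, x)" "e \<in> edges G"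
      | (right) u f where "z = Inr (u, f)" "f \<in> edges H"
      by (auto simp: cart2_def)
    then show "(case src (cart2 G H) z of (u, x) \<Rightarrow> (c u + d x) mod k) \<noteq>
               (case trg (cart2 G H) z of (u, x) \<Rightarrow> (c u + d x) mod k)"
    proof cases
      case left
      with assms(1) c have "c (src G e) < k" "c (trg G e) < k" "c (src G e) \<noteq> c (trg G e)"
        unfolding signed_graph_def proper_coloring_def by auto
      with left show ?thesis by (simp add: cart2_def shift_inj)
    next
      case right
      with assms(2) d have "d (src H f) < k" "d (trg H f) < k" "d (src H f) \<noteq> d (trg H f)"
        unfolding signed_graph_def proper_coloring_def by auto
      with right shift_inj[of "d (src H f)" "d (trg H f)" "c u"]
      show ?thesis by (simp add: cart2_def add.commute)
    qed
  qed (auto simp: cart2_def dest: k)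
qed

lemma abs_vsign:
  assumes "signed_graph G"
  shows "\<bar>vsign G u\<bar> = 1"
proof -
  have "\<bar>sgn G e\<bar> = 1" if "e \<in> edges G" for e
    using assms that unfolding signed_graph_def by auto
  then show ?thesis
    unfolding vsign_def abs_prod by (intro prod.neutral) (auto simp: power_int_abs)
qed

lemma signed_graph_cart2:
  assumes G: "signed_graph G" and H: "signed_graph H"
  shows "signed_graph (cart2 G H)"
proof -
  have unit_iff: "(x = 1 \<or> x = -1) \<longleftrightarrow> \<bar>x\<bar> = 1" for x :: real
    by auto
  show ?thesis
    using G H abs_vsign[OF G] abs_vsign[OF H]
    unfolding signed_graph_def cart2_def unit_iff by (auto simp: abs_mult)
qed

lemma circular_coloring_of_proper_coloring:
  assumes "signed_graph G" and c: "proper_coloring G k c"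
  shows "circular_coloring (2 * real k) G (\<lambda>v. real (c v))"
  unfolding circular_coloring_def
proof (intro conjI ballI impI)
  fix v assume "v \<in> verts G"
  then show "0 \<le> real (c v)" "real (c v) < 2 * real k"
    using c by (auto simp: proper_coloring_def)
next
  fix e assume "e \<in> edges G"
  with assms have ab: "c (src G e) < k" "c (trg G e) < k" "c (src G e) \<noteq> c (trg G e)"
    unfolding signed_graph_def proper_coloring_def by auto
  then show "1 \<le> cdist (2 * real k) (real (c (src G e))) (real (c (trg G e)))"
    unfolding cdist_def by auto
  have "antipode (2 * real k) (real (c (trg G e))) = real (c (trg G e)) + real k"
    using ab unfolding antipode_def by auto
  with ab show "1 \<le> cdist (2 * real k) (real (c (src G e)))
                        (antipode (2 * real k) (real (c (trg G e))))"
    unfolding cdist_def by auto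
qed

lemma chi_c_le_circular_coloring:
  "circular_coloring r G f \<Longrightarrow> 2 \<le> r \<Longrightarrow> chi_c G \<le> r"
  unfolding chi_c_def by (rule cInf_lower) (auto intro: bdd_belowI[of _ 2])

theorem corollary2:
  fixes G :: "('v, 'e) sgraph" and H :: "('w, 'f) sgraph"
  assumes "signed_graph G" and "signed_graph H"
    and "verts G \<noteq> {}" and "verts H \<noteq> {}"
  shows "chi_c (cart2 G H) \<le> 2 * real (max (chi G) (chi H))"
proof -
  define k where "k = max (chi G) (chi H)"
  obtain c where "proper_coloring G (chi G) c" using proper_coloring_chi[OF assms(1)] .
  then have c: "proper_coloring G k c" by (rule proper_coloring_mono) (simp add: k_def)
  obtain d where "proper_coloring H (chi H) d" using proper_coloring_chi[OF assms(2)] .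
  then have d: "proper_coloring H k d" by (rule proper_coloring_mono) (simp add: k_def)
  have "0 < k" using c assms(3) by (rule proper_coloring_pos)
  have "circular_coloring (2 * real k) (cart2 G H) (\<lambda>v. real ((\<lambda>(u, x). (c u + d x) mod k) v))"
    using signed_graph_cart2[OF assms(1,2)] proper_coloring_cart2[OF assms(1,2) c d]
    by (rule circular_coloring_of_proper_coloring)
  then show ?thesis
    unfolding k_def[symmetric] by (rule chi_c_le_circular_coloring) (use \<open>0 < k\<close> in simp)
qed

end
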